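(* For every integer $n\ge 4$, \[ \gamma_{2t}(K_n\Box K_{n+2})=\begin{cases}(3n+4)/2, & n\equiv 0\pmod 2,\\ (3n+3)/2, & n\equiv 1\pmod 4,\\ (3n+5)/2, & n\equiv 3\pmod 4.\end{cases} \]
   Context: For a graph $G=(V,E)$, a set $S\subseteq V$ is a total $2$-dominating set if every vertex of $V$ (including those in $S$) is adjacent to at least $2$ vertices of $S$; $\gamma_{2t}(G)$ is the minimum cardinality of such a set. $G\Box H$ denotes the Cartesian product: vertex set $V(G)\times V(H)$, with $(u_1,v_1)\sim(u_2,v_2)$ iff either $u_1=u_2$ and $v_1\sim v_2$, or $v_1=v_2$ and $u_1\sim u_2$. $K_n$ is the complete graph on $n$ vertices. *)

theory Defs
  imports Main
begin

text \<open>A (finite simple) graph is given by a vertex set V and a symmetric,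
irreflexive adjacency relation adj.\<close>

definition total_k_dominating :: "'a set \<Rightarrow> ('a \<Rightarrow> 'a \<Rightarrow> bool) \<Rightarrow> nat \<Rightarrow> 'a set \<Rightarrow> bool" where
  "total_k_dominating V adj k S \<longleftrightarrow>
     S \<subseteq> V \<and> (\<forall>v\<in>V. card {u\<in>S. adj v u} \<ge> k)"

definition total_k_domination_number :: "'a set \<Rightarrow> ('a \<Rightarrow> 'a \<Rightarrow> bool) \<Rightarrow> nat \<Rightarrow> nat" where
  "total_k_domination_number V adj k = (LEAST m. \<exists>S. total_k_dominating V adj k S \<and> card S = m)"

definition complete_verts :: "nat \<Rightarrow> nat set" where
  "complete_verts n = {0..<n}"

definition complete_adj :: "nat \<Rightarrow> nat \<Rightarrow> bool" where
  "complete_adj u v \<longleftrightarrow> u \<noteq> v"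

definition cart_verts :: "'a set \<Rightarrow> 'b set \<Rightarrow> ('a \<times> 'b) set" where
  "cart_verts V W = V \<times> W"

definition cart_adj :: "('a \<Rightarrow> 'a \<Rightarrow> bool) \<Rightarrow> ('b \<Rightarrow> 'b \<Rightarrow> bool) \<Rightarrow> ('a \<times> 'b) \<Rightarrow> ('a \<times> 'b) \<Rightarrow> bool" where
  "cart_adj adjG adjH p q \<longleftrightarrow>
     (fst p = fst q \<and> adjH (snd p) (snd q)) \<or> (snd p = snd q \<and> adjG (fst p) (fst q))"

end

theory Submission imports Defs Complex_Main begin

text \<open>
  In the rook's graph \<open>K\<^sub>n \<box> K\<^sub>n\<^sub>+\<^sub>2\<close> a vertex sees the other elements of \<open>S\<close> in its row and
  in its column. If some row of \<open>S\<close> is empty, every column needs two elements of \<open>S\<close>, so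
  \<open>|S| \<ge> 2(n+2)\<close>; similarly for an empty column. Otherwise every \<open>u \<in> S\<close> has row count \<open>r\<close> and
  column count \<open>c\<close> with \<open>r + c \<ge> 4\<close>, hence \<open>1/r + 1/c \<le> 4/3\<close>. Summing over \<open>S\<close>, the terms
  \<open>1/r\<close> add up to the number of rows and the terms \<open>1/c\<close> to the number of columns, which gives
  \<open>4|S| \<ge> 3(2n+2)\<close>. Equality forces \<open>{r, c} = {1, 3}\<close> everywhere and then a congruence that
  fails for \<open>n \<equiv> 3 (mod 4)\<close>. Sets of the claimed size are built from small bases by adding, along the
  diagonal, \<open>4\<times>4\<close> blocks containing an L-shaped configuration of six vertices.
\<close>

abbreviation grid :: "nat \<Rightarrow> nat \<Rightarrow> (nat \<times> nat) set" where
  "grid a b \<equiv> cart_verts (complete_verts a) (complete_verts b)"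

abbreviation rook_adj :: "nat \<times> nat \<Rightarrow> nat \<times> nat \<Rightarrow> bool" where
  "rook_adj \<equiv> cart_adj complete_adj complete_adj"

lemma grid_eq: "grid a b = {0..<a} \<times> {0..<b}"
  unfolding cart_verts_def complete_verts_def ..

lemma rook_adj_iff: "rook_adj v u \<longleftrightarrow> u \<noteq> v \<and> (fst u = fst v \<or> snd u = snd v)"
  unfolding cart_adj_def complete_adj_def by (cases u; cases v) auto

lemma rook_adj_sym: "rook_adj u v \<longleftrightarrow> rook_adj v u"
  unfolding rook_adj_iff by auto

lemma rook_adj_irrefl: "\<not> rook_adj v v"
  unfolding rook_adj_iff by simp

lemma rook_degree:
  assumes "finite S"
  shows "card {u\<in>S. rook_adj v u} =
           card {u\<in>S. fst u = fst v \<and> u \<noteq> v} + card {u\<in>S. snd u = snd v \<and> u \<noteq> v}"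
proof -
  have "{u\<in>S. rook_adj v u} = {u\<in>S. fst u = fst v \<and> u \<noteq> v} \<union> {u\<in>S. snd u = snd v \<and> u \<noteq> v}"
    by (auto simp: rook_adj_iff)
  moreover have "{u\<in>S. fst u = fst v \<and> u \<noteq> v} \<inter> {u\<in>S. snd u = snd v \<and> u \<noteq> v} = {}"
    by (auto simp: prod_eq_iff)
  ultimately show ?thesis
    using assms by (simp add: card_Un_disjoint)
qed

lemma total_2_dominating_grid_finite:
  "total_k_dominating (grid a b) rook_adj k S \<Longrightarrow> finite S"
  unfolding total_k_dominating_def grid_eq using finite_subset by blast

text \<open>A sufficient condition for total 2-domination that survives the block extension below.\<close>

definition dom_pattern :: "nat \<Rightarrow> nat \<Rightarrow> (nat \<times> nat) set \<Rightarrow> bool" where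
  "dom_pattern a b S \<longleftrightarrow> S \<subseteq> {0..<a} \<times> {0..<b} \<and>
     (\<forall>i<a. \<exists>j. (i, j) \<in> S) \<and> (\<forall>j<b. \<exists>i. (i, j) \<in> S) \<and>
     (\<forall>v\<in>S. \<exists>u\<in>S. \<exists>w\<in>S. u \<noteq> w \<and> rook_adj v u \<and> rook_adj v w)"

lemma dom_pattern_total_2_dominating:
  assumes "dom_pattern a b S"
  shows "total_k_dominating (grid a b) rook_adj 2 S"
proof -
  have sub: "S \<subseteq> {0..<a} \<times> {0..<b}"
    using assms unfolding dom_pattern_def by blast
  then have fin: "finite S"
    using finite_subset by blast
  have "2 \<le> card {u\<in>S. rook_adj v u}" if "v \<in> {0..<a} \<times> {0..<b}" for v
  proof -
    obtain u w where "u \<in> S" "w \<in> S" "u \<noteq> w" "rook_adj v u" "rook_adj v w"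
    proof (cases "v \<in> S")
      case True
      then show ?thesis
        using assms that unfolding dom_pattern_def by blast
    next
      case False
      obtain i j where "v = (i, j)" "i < a" "j < b"
        using \<open>v \<in> {0..<a} \<times> {0..<b}\<close> by auto
      moreover obtain j' where "(i, j') \<in> S"
        using assms \<open>i < a\<close> unfolding dom_pattern_def by blast
      moreover obtain i' where "(i', j) \<in> S"
        using assms \<open>j < b\<close> unfolding dom_pattern_def by blast
      ultimately show ?thesis
        using False that[of "(i, j')" "(i', j)"] by (auto simp: rook_adj_iff)
    qed
    then have "card {u, w} \<le> card {u\<in>S. rook_adj v u}"
      by (intro card_mono) (auto simp: fin)
    with \<open>u \<noteq> w\<close> show ?thesis
      by simp
  qed
  with sub show ?thesis
    unfolding total_k_dominating_def grid_eq by blast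
qed

lemma rook_triangle_self_dominating:
  assumes "rook_adj x y" "rook_adj y z" "rook_adj x z" "v \<in> {x, y, z}"
  shows "\<exists>u\<in>{x, y, z}. \<exists>w\<in>{x, y, z}. u \<noteq> w \<and> rook_adj v u \<and> rook_adj v w"
  using assms rook_adj_sym[of x y] rook_adj_sym[of y z] rook_adj_sym[of x z]
  by (auto simp: rook_adj_irrefl)

definition block :: "nat \<Rightarrow> nat \<Rightarrow> (nat \<times> nat) set" where
  "block a b = {(a, b), (a + 1, b), (a + 2, b), (a + 3, b + 1), (a + 3, b + 2), (a + 3, b + 3)}"

lemma block_self_dominating:
  assumes "v \<in> block a b"
  shows "\<exists>u\<in>block a b. \<exists>w\<in>block a b. u \<noteq> w \<and> rook_adj v u \<and> rook_adj v w"
proof -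
  let ?T\<^sub>1 = "{(a, b), (a + 1, b), (a + 2, b)}"
    and ?T\<^sub>2 = "{(a + 3, b + 1), (a + 3, b + 2), (a + 3, b + 3)}"
  have "v \<in> ?T\<^sub>1 \<or> v \<in> ?T\<^sub>2" and "?T\<^sub>1 \<subseteq> block a b" and "?T\<^sub>2 \<subseteq> block a b"
    using assms unfolding block_def by auto
  moreover have "\<exists>u\<in>?T\<^sub>1. \<exists>w\<in>?T\<^sub>1. u \<noteq> w \<and> rook_adj v u \<and> rook_adj v w" if "v \<in> ?T\<^sub>1"
    using that by (intro rook_triangle_self_dominating) (auto simp: rook_adj_iff)
  moreover have "\<exists>u\<in>?T\<^sub>2. \<exists>w\<in>?T\<^sub>2. u \<noteq> w \<and> rook_adj v u \<and> rook_adj v w" if "v \<in> ?T\<^sub>2"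
    using that by (intro rook_triangle_self_dominating) (auto simp: rook_adj_iff)
  ultimately show ?thesis
    by (meson subsetD)
qed

lemma dom_pattern_extend:
  assumes "dom_pattern a b S"
  shows "dom_pattern (a + 4) (b + 4) (S \<union> block a b)"
    and "card (S \<union> block a b) = card S + 6"
proof -
  have sub: "S \<subseteq> {0..<a} \<times> {0..<b}"
    using assms unfolding dom_pattern_def by blast
  then have "finite S" "S \<inter> block a b = {}"
    using finite_subset by (auto simp: block_def)
  then show "card (S \<union> block a b) = card S + 6"
    by (simp add: card_Un_disjoint block_def)
  have rows: "\<exists>j. (i, j) \<in> S \<union> block a b" if i: "i < a + 4" for i
  proof -
    consider "i < a" | "i = a" | "i = a + 1" | "i = a + 2" | "i = a + 3"
      using i by linarith
    then show ?thesis
      using assms unfolding dom_pattern_def block_def by cases auto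
  qed
  have cols: "\<exists>i. (i, j) \<in> S \<union> block a b" if j: "j < b + 4" for j
  proof -
    consider "j < b" | "j = b" | "j = b + 1" | "j = b + 2" | "j = b + 3"
      using j by linarith
    then show ?thesis
      using assms unfolding dom_pattern_def block_def by cases auto
  qed
  have nbrs: "\<exists>u\<in>S \<union> block a b. \<exists>w\<in>S \<union> block a b. u \<noteq> w \<and> rook_adj v u \<and> rook_adj v w"
    if "v \<in> S \<union> block a b" for v
    using that assms block_self_dominating[of v a b] unfolding dom_pattern_def by blast
  have "S \<union> block a b \<subseteq> {0..<a + 4} \<times> {0..<b + 4}"
    using sub by (auto simp: block_def)
  with rows cols nbrs show "dom_pattern (a + 4) (b + 4) (S \<union> block a b)"
    unfolding dom_pattern_def by blast
qed

definition gamma_formula :: "nat \<Rightarrow> nat" where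
  "gamma_formula n = (if even n then (3 * n + 4) div 2
     else if n mod 4 = 1 then (3 * n + 3) div 2 else (3 * n + 5) div 2)"

lemma gamma_formula_add_4: "gamma_formula (n + 4) = gamma_formula n + 6"
  unfolding gamma_formula_def by (auto simp: mod_add_self2)

lemma dom_pattern_base_cases:
  "\<exists>S. dom_pattern 4 6 S \<and> card S = 8"
  "\<exists>S. dom_pattern 5 7 S \<and> card S = 9"
  "\<exists>S. dom_pattern 6 8 S \<and> card S = 11"
  "\<exists>S. dom_pattern 7 9 S \<and> card S = 13"
proof -
  show "\<exists>S. dom_pattern 4 6 S \<and> card S = 8"
    by (intro exI[of _ "{(0,0), (1,0), (2,0), (2,1), (2,2), (3,3), (3,4), (3,5)}"] conjI)
      (auto simp: dom_pattern_def rook_adj_iff less_Suc_eq numeral_eq_Suc)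
  show "\<exists>S. dom_pattern 5 7 S \<and> card S = 9"
    by (intro exI[of _ "{(0,0), (1,0), (2,0), (3,1), (3,2), (3,3), (4,4), (4,5), (4,6)}"] conjI)
      (auto simp: dom_pattern_def rook_adj_iff less_Suc_eq numeral_eq_Suc)
  show "\<exists>S. dom_pattern 6 8 S \<and> card S = 11"
    by (intro exI[of _ "{(0,0), (1,0), (2,0), (3,0), (4,1), (4,2), (4,3), (5,4), (5,5), (5,6),
        (5,7)}"] conjI)
      (auto simp: dom_pattern_def rook_adj_iff less_Suc_eq numeral_eq_Suc)
  show "\<exists>S. dom_pattern 7 9 S \<and> card S = 13"
    by (intro exI[of _ "{(0,0), (1,0), (2,1), (3,1), (4,0), (4,2), (4,3), (5,1), (5,4), (5,5),
        (6,6), (6,7), (6,8)}"] conjI)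
      (auto simp: dom_pattern_def rook_adj_iff less_Suc_eq numeral_eq_Suc)
qed

lemma dom_pattern_exists:
  "4 \<le> n \<Longrightarrow> \<exists>S. dom_pattern n (n + 2) S \<and> card S = gamma_formula n"
proof (induction n rule: less_induct)
  case (less n)
  show ?case
  proof (cases "n \<le> 7")
    case True
    then consider "n = 4" | "n = 5" | "n = 6" | "n = 7"
      using less.prems by linarith
    then show ?thesis
      by cases (use dom_pattern_base_cases in \<open>simp_all add: gamma_formula_def\<close>)
  next
    case False
    define m where "m = n - 4"
    then have n: "n = m + 4" and "4 \<le> m"
      using False by auto
    then obtain S where "dom_pattern m (m + 2) S" "card S = gamma_formula m"
      using less.IH[of m] n by auto
    then show ?thesis
      using dom_pattern_extend[of m "m + 2" S] unfolding n gamma_formula_add_4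
      by (intro exI[of _ "S \<union> block m (m + 2)"]) (simp add: add.commute add.left_commute)
  qed
qed

lemma card_eq_sum_card_fibres:
  "finite S \<Longrightarrow> finite T \<Longrightarrow> g ` S \<subseteq> T \<Longrightarrow> card S = (\<Sum>t\<in>T. card {x\<in>S. g x = t})"
  using sum.group[of S T g "\<lambda>_. 1 :: nat"] by simp

lemma sum_inverse_card_fibres:
  assumes "finite S"
  shows "(\<Sum>u\<in>S. 1 / real (card {x\<in>S. g x = g u})) = real (card (g ` S))"
proof -
  have "(\<Sum>u\<in>S. 1 / real (card {x\<in>S. g x = g u}))
      = (\<Sum>t\<in>g ` S. \<Sum>u\<in>{x\<in>S. g x = t}. 1 / real (card {x\<in>S. g x = g u}))"
    by (rule sum.group[OF assms finite_imageI[OF assms] subset_refl, symmetric])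
  also have "\<dots> = (\<Sum>t\<in>g ` S. \<Sum>u\<in>{x\<in>S. g x = t}. 1 / real (card {x\<in>S. g x = t}))"
    by (intro sum.cong refl) auto
  also have "\<dots> = (\<Sum>t\<in>g ` S. 1)"
  proof (rule sum.cong)
    fix t assume "t \<in> g ` S"
    then have "{x\<in>S. g x = t} \<noteq> {}"
      by blast
    with assms show "(\<Sum>u\<in>{x\<in>S. g x = t}. 1 / real (card {x\<in>S. g x = t})) = 1"
      by simp
  qed simp
  finally show ?thesis
    by simp
qed

lemma inverse_add_le_four_thirds:
  fixes r c :: nat
  assumes "1 \<le> r" "1 \<le> c" "4 \<le> r + c"
  shows "1 / real r + 1 / real c \<le> 4 / 3"
    and "1 / real r + 1 / real c = 4 / 3 \<Longrightarrow> (r = 1 \<and> c = 3) \<or> (r = 3 \<and> c = 1)"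
proof -
  have bound: "1 / real k \<le> 1 / m" if "m \<le> real k" "0 < m" for k and m :: real
    using that by (intro frac_le) auto
  consider "r = 1" "c = 3" | "r = 3" "c = 1" | "r = 1" "4 \<le> c" | "r = 2" "2 \<le> c"
    | "3 \<le> r" "2 \<le> c" | "4 \<le> r" "1 \<le> c"
    using assms by linarith
  then have "1 / real r + 1 / real c < 4 / 3 \<or> (r = 1 \<and> c = 3) \<or> (r = 3 \<and> c = 1)"
  proof cases
    case 3
    then have "1 / real r = 1" "1 / real c \<le> 1 / 4"
      by (auto intro!: bound)
    then show ?thesis by linarith
  next
    case 4
    then have "1 / real r = 1 / 2" "1 / real c \<le> 1 / 2"
      by (auto intro!: bound)
    then show ?thesis by linarith
  next
    case 5
    then have "1 / real r \<le> 1 / 3" "1 / real c \<le> 1 / 2"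
      by (auto intro!: bound)
    then show ?thesis by linarith
  next
    case 6
    then have "1 / real r \<le> 1 / 4" "1 / real c \<le> 1"
      by (auto intro!: bound)
    then show ?thesis by linarith
  qed simp_all
  then show "1 / real r + 1 / real c \<le> 4 / 3"
    and "1 / real r + 1 / real c = 4 / 3 \<Longrightarrow> (r = 1 \<and> c = 3) \<or> (r = 3 \<and> c = 1)"
    by auto
qed

lemma total_2_dominating_empty_row:
  assumes dom: "total_k_dominating (grid a b) rook_adj 2 S"
    and "i < a" and empty: "\<forall>j. (i, j) \<notin> S"
  shows "2 * b \<le> card S"
proof -
  have fin: "finite S" and sub: "S \<subseteq> {0..<a} \<times> {0..<b}"
    using dom total_2_dominating_grid_finite unfolding total_k_dominating_def grid_eq by blast+
  have "2 \<le> card {x\<in>S. snd x = j}" if "j < b" for j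
  proof -
    have "2 \<le> card {u\<in>S. rook_adj (i, j) u}"
      using dom \<open>i < a\<close> that unfolding total_k_dominating_def grid_eq by auto
    moreover have "{u\<in>S. fst u = i \<and> u \<noteq> (i, j)} = {}" "{u\<in>S. snd u = j \<and> u \<noteq> (i, j)} = {x\<in>S. snd x = j}"
      using empty by force+
    ultimately show ?thesis
      using rook_degree[OF fin, of "(i, j)"] by simp
  qed
  then have "(\<Sum>j\<in>{0..<b}. 2) \<le> (\<Sum>j\<in>{0..<b}. card {x\<in>S. snd x = j})"
    by (intro sum_mono) simp
  also have "\<dots> = card S"
    using sub by (intro card_eq_sum_card_fibres[symmetric] fin) auto
  finally show ?thesis
    by simp
qed

lemma total_2_dominating_empty_column:
  assumes dom: "total_k_dominating (grid a b) rook_adj 2 S"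
    and "j < b" and empty: "\<forall>i. (i, j) \<notin> S"
  shows "2 * a \<le> card S"
proof -
  have fin: "finite S" and sub: "S \<subseteq> {0..<a} \<times> {0..<b}"
    using dom total_2_dominating_grid_finite unfolding total_k_dominating_def grid_eq by blast+
  have "2 \<le> card {x\<in>S. fst x = i}" if "i < a" for i
  proof -
    have "2 \<le> card {u\<in>S. rook_adj (i, j) u}"
      using dom \<open>j < b\<close> that unfolding total_k_dominating_def grid_eq by auto
    moreover have "{u\<in>S. snd u = j \<and> u \<noteq> (i, j)} = {}" "{u\<in>S. fst u = i \<and> u \<noteq> (i, j)} = {x\<in>S. fst x = i}"
      using empty by force+
    ultimately show ?thesis
      using rook_degree[OF fin, of "(i, j)"] by simp
  qed
  then have "(\<Sum>i\<in>{0..<a}. 2) \<le> (\<Sum>i\<in>{0..<a}. card {x\<in>S. fst x = i})"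
    by (intro sum_mono) simp
  also have "\<dots> = card S"
    using sub by (intro card_eq_sum_card_fibres[symmetric] fin) auto
  finally show ?thesis
    by simp
qed

lemma total_2_dominating_line_counts:
  assumes dom: "total_k_dominating (grid a b) rook_adj 2 S" and "u \<in> S"
  shows "4 \<le> card {x\<in>S. fst x = fst u} + card {x\<in>S. snd x = snd u}"
proof -
  have fin: "finite S"
    using dom by (rule total_2_dominating_grid_finite)
  have "u \<in> grid a b"
    using dom \<open>u \<in> S\<close> unfolding total_k_dominating_def by blast
  then have "2 \<le> card {x\<in>S. rook_adj u x}"
    using dom unfolding total_k_dominating_def by blast
  moreover have "{x\<in>S. fst x = fst u \<and> x \<noteq> u} = {x\<in>S. fst x = fst u} - {u}"
    "{x\<in>S. snd x = snd u \<and> x \<noteq> u} = {x\<in>S. snd x = snd u} - {u}"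
    by auto
  moreover have "card {u} \<le> card {x\<in>S. fst x = fst u}" "card {u} \<le> card {x\<in>S. snd x = snd u}"
    using fin \<open>u \<in> S\<close> by (intro card_mono; auto)+
  ultimately show ?thesis
    using rook_degree[OF fin, of u] fin \<open>u \<in> S\<close> by simp
qed

lemma sum_inverse_le_four_thirds_card:
  fixes r c :: "'a \<Rightarrow> nat"
  assumes fin: "finite S" and counts: "\<And>u. u \<in> S \<Longrightarrow> 1 \<le> r u \<and> 1 \<le> c u \<and> 4 \<le> r u + c u"
  defines "R \<equiv> \<Sum>u\<in>S. 1 / real (r u)" and "C \<equiv> \<Sum>u\<in>S. 1 / real (c u)"
  shows "R + C \<le> 4 / 3 * real (card S)"
    and "R + C = 4 / 3 * real (card S) \<Longrightarrow> 9 * R - 3 * C = 8 * real (card {u\<in>S. r u = 1})"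
proof -
  define w where "w u = 4 / 3 - (1 / real (r u) + 1 / real (c u))" for u
  have w_nonneg: "0 \<le> w u" if "u \<in> S" for u
    using inverse_add_le_four_thirds(1) counts[OF that] unfolding w_def by simp
  have w_sum: "(\<Sum>u\<in>S. w u) = 4 / 3 * real (card S) - (R + C)"
    unfolding w_def sum_subtractf sum.distrib R_def C_def by simp
  show "R + C \<le> 4 / 3 * real (card S)"
    using sum_nonneg[of S w] w_nonneg w_sum by simp
  assume "R + C = 4 / 3 * real (card S)"
  then have "(\<Sum>u\<in>S. w u) = 0"
    using w_sum by simp
  then have "w u = 0" if "u \<in> S" for u
    using sum_nonneg_eq_0_iff[OF fin] w_nonneg that by blast
  then have "(r u = 1 \<and> c u = 3) \<or> (r u = 3 \<and> c u = 1)" if "u \<in> S" for u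
    using inverse_add_le_four_thirds(2) counts[OF that] that unfolding w_def by simp
  then have type_weight: "9 / real (r u) - 3 / real (c u) = (if r u = 1 then 8 else 0)"
    if "u \<in> S" for u
    using that by fastforce
  have "9 * R - 3 * C = (\<Sum>u\<in>S. 9 / real (r u) - 3 / real (c u))"
    unfolding R_def C_def sum_subtractf sum_distrib_left by simp
  also have "\<dots> = (\<Sum>u\<in>S. if r u = 1 then 8 else 0)"
    using type_weight by (rule sum.cong[OF refl])
  also have "\<dots> = 8 * real (card {u\<in>S. r u = 1})"
    using fin by (simp add: sum.If_cases Int_def)
  finally show "9 * R - 3 * C = 8 * real (card {u\<in>S. r u = 1})" .
qed

lemma total_2_dominating_weight_bound:
  assumes dom: "total_k_dominating (grid a b) rook_adj 2 S"
    and rows: "fst ` S = {0..<a}" and cols: "snd ` S = {0..<b}"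
  shows "3 * (a + b) \<le> 4 * card S"
    and "3 * (a + b) = 4 * card S \<Longrightarrow> \<exists>k. 9 * a = 3 * b + 8 * k"
proof -
  have fin: "finite S"
    using dom by (rule total_2_dominating_grid_finite)
  define r where "r u = card {x\<in>S. fst x = fst u}" for u :: "nat \<times> nat"
  define c where "c u = card {x\<in>S. snd x = snd u}" for u :: "nat \<times> nat"
  have R: "(\<Sum>u\<in>S. 1 / real (r u)) = real a" and C: "(\<Sum>u\<in>S. 1 / real (c u)) = real b"
    using sum_inverse_card_fibres[OF fin, of fst] sum_inverse_card_fibres[OF fin, of snd] rows cols
    unfolding r_def c_def by simp_all
  have counts: "1 \<le> r u \<and> 1 \<le> c u \<and> 4 \<le> r u + c u" if "u \<in> S" for u
  proof -
    have "card {u} \<le> r u" "card {u} \<le> c u"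
      unfolding r_def c_def using fin that by (intro card_mono; auto)+
    then show ?thesis
      using total_2_dominating_line_counts[OF dom that] unfolding r_def c_def by auto
  qed
  have "real a + real b \<le> 4 / 3 * real (card S)"
    using sum_inverse_le_four_thirds_card(1)[OF fin, of r c] counts unfolding R C by blast
  then have "real (3 * (a + b)) \<le> real (4 * card S)"
    by simp
  then show "3 * (a + b) \<le> 4 * card S"
    by (simp only: of_nat_le_iff)
  assume "3 * (a + b) = 4 * card S"
  then have "real (3 * (a + b)) = real (4 * card S)"
    by (rule arg_cong)
  then have "real a + real b = 4 / 3 * real (card S)"
    by simp
  then have "9 * real a - 3 * real b = 8 * real (card {u\<in>S. r u = 1})"
    using sum_inverse_le_four_thirds_card(2)[OF fin, of r c] counts unfolding R C by blast
  then show "\<exists>k. 9 * a = 3 * b + 8 * k"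
    by (intro exI[of _ "card {u\<in>S. r u = 1}"]) linarith
qed

lemma double_gamma_formula:
  "2 * gamma_formula n = (if even n then 3 * n + 4 else if n mod 4 = 1 then 3 * n + 3 else 3 * n + 5)"
  unfolding gamma_formula_def by (auto elim!: evenE oddE)

lemma total_2_dominating_card_ge_gamma_formula:
  assumes "4 \<le> n" and dom: "total_k_dominating (grid n (n + 2)) rook_adj 2 S"
  shows "gamma_formula n \<le> card S"
proof -
  have sub: "S \<subseteq> {0..<n} \<times> {0..<n + 2}"
    using dom unfolding total_k_dominating_def grid_eq by blast
  have "2 * gamma_formula n \<le> 2 * card S"
  proof (cases "\<exists>i<n. \<forall>j. (i, j) \<notin> S")
    case True
    then have "2 * (n + 2) \<le> card S"
      using total_2_dominating_empty_row[OF dom] by blast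
    then show ?thesis
      unfolding double_gamma_formula by auto
  next
    case no_empty_row: False
    show ?thesis
    proof (cases "\<exists>j<n + 2. \<forall>i. (i, j) \<notin> S")
      case True
      then have "2 * n \<le> card S"
        using total_2_dominating_empty_column[OF dom] by blast
      then show ?thesis
        using \<open>4 \<le> n\<close> unfolding double_gamma_formula by presburger
    next
      case False
      with no_empty_row sub have "fst ` S = {0..<n}" "snd ` S = {0..<n + 2}"
        by (force simp: image_iff)+
      note weight = total_2_dominating_weight_bound[OF dom this]
      have "3 * n + 3 \<le> 2 * card S"
        using weight(1) by simp
      moreover have "2 * card S \<noteq> 3 * n + 3" if "n mod 4 = 3"
      proof
        assume "2 * card S = 3 * n + 3"
        then obtain k where "9 * n = 3 * (n + 2) + 8 * k"
          using weight(2) by auto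
        then have "3 * n = 3 + 4 * k"
          by simp
        with that show False
          by presburger
      qed
      ultimately show ?thesis
        unfolding double_gamma_formula by presburger
    qed
  qed
  then show ?thesis
    by simp
qed

theorem theorem15:
  fixes n :: nat
  assumes "n \<ge> 4"
  shows "total_k_domination_number
           (cart_verts (complete_verts n) (complete_verts (n + 2)))
           (cart_adj complete_adj complete_adj) 2 =
         (if even n then (3 * n + 4) div 2
          else if n mod 4 = 1 then (3 * n + 3) div 2
          else (3 * n + 5) div 2)"
proof -
  have "total_k_domination_number (grid n (n + 2)) rook_adj 2 = gamma_formula n"
    unfolding total_k_domination_number_def
  proof (rule Least_equality)
    obtain S where "dom_pattern n (n + 2) S" "card S = gamma_formula n"
      using dom_pattern_exists[OF assms] by blast
    then show "\<exists>S. total_k_dominating (grid n (n + 2)) rook_adj 2 S \<and> card S = gamma_formula n"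
      using dom_pattern_total_2_dominating by blast
  qed (use total_2_dominating_card_ge_gamma_formula[OF assms] in blast)
  then show ?thesis
    unfolding gamma_formula_def .
qed

end
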